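(* Let $\tilde{\mathbf{G}}$ be a degree $2$ cover of $\mathbf{G}=\mathbf{GSp}_{2r}$ (split) with first Brylinski–Deligne invariant $Q_{0,1}$. Then the dual group $\tilde G^\vee$ is isomorphic to $GSp_{2r}$ if $r$ is odd, and to $PGSp_{2r}\times\mathbb{G}_m$ if $r$ is even.
   Context: For $\mathbf{GSp}_{2r}$ with a standard split maximal torus and Borel subgroup, let $e_0,\dots,e_r$ be a basis of the cocharacter lattice $Y$ and $f_0,\dots,f_r$ the dual basis of the character lattice $X$; simple roots are $\alpha_i=f_i-f_{i+1}$ ($1\le i\le r-1$), $\alpha_r=2f_r-f_0$, simple coroots $\alpha_i^\vee=e_i-e_{i+1}$ ($1\le i\le r-1$), $\alpha_r^\vee=e_r$. The Weyl group is $S_r\ltimes\mu_2^r$, with $S_r$ permuting indices $1,\dots,r$ (fixing $e_0$) and involutions $w_j$ with $w_j(e_j)=-e_j$, $w_j(e_i)=e_i$ for $i\ne j,0$, $w_j(e_0)=e_0+e_j$. For integers $\kappa,\nu$, $Q_{\kappa,\nu}$ is the unique Weyl-invariant quadratic form with $Q(e_0)=\kappa$ and $Q(e_i)=\nu$ for $1\le i\le r$. Dual group of a degree $n$ cover with first invariant $Q$: set $\beta_Q(y_1,y_2)=n^{-1}(Q(y_1+y_2)-Q(y_1)-Q(y_2))$, $Y_{Q,n}=\{y\in Y:\beta_Q(y,Y)\subset\mathbb{Z}\}$, $X_{Q,n}=\{x\in n^{-1}X:\langle x,Y_{Q,n}\rangle\subset\mathbb{Z}\}$; for each root $\phi$ put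 $n_\phi=n/\gcd(n,Q(\phi^\vee))$, $\tilde\phi=n_\phi^{-1}\phi$, $\tilde\phi^\vee=n_\phi\phi^\vee$. The dual group is the split reductive group whose root datum has character lattice $Y_{Q,n}$, roots $\{\tilde\phi^\vee\}$, cocharacter lattice $X_{Q,n}$, coroots $\{\tilde\phi\}$. *)

theory Defs
  imports Complex_Main "HOL-Library.Function_Algebras"
begin

text \<open>Vectors in Q^(N) (finitely many coordinates), used as ambient space for
  character and cocharacter lattices. Coordinates 0..r carry the basis e_0..e_r
  (resp. f_0..f_r).\<close>

type_synonym vec = "nat \<Rightarrow> rat"

definition ev :: "nat \<Rightarrow> vec" where
  "ev i = (\<lambda>j. if j = i then 1 else 0)"

definition smul :: "rat \<Rightarrow> vec \<Rightarrow> vec" where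
  "smul c v = (\<lambda>i. c * v i)"

definition Zvec :: "nat \<Rightarrow> vec set" where
  "Zvec r = {v. (\<forall>i. v i \<in> \<int>) \<and> (\<forall>i>r. v i = 0)}"

text \<open>A root datum: ambient dimension, character lattice X, cocharacter lattice Y,
  and the set of pairs (root, corresponding coroot).\<close>
record rdatum =
  rd_dim :: nat
  rd_X :: "vec set"
  rd_Y :: "vec set"
  rd_R :: "(vec \<times> vec) set"

definition rd_pair :: "rdatum \<Rightarrow> vec \<Rightarrow> vec \<Rightarrow> rat" where
  "rd_pair D x y = (\<Sum>i<rd_dim D. x i * y i)"

definition rd_iso :: "rdatum \<Rightarrow> rdatum \<Rightarrow> bool" where
  "rd_iso D D' \<longleftrightarrow> (\<exists>f g.
     bij_betw f (rd_X D) (rd_X D') \<and> bij_betw g (rd_Y D') (rd_Y D) \<and>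
     (\<forall>x\<in>rd_X D. \<forall>x'\<in>rd_X D. f (x + x') = f x + f x') \<and>
     (\<forall>y\<in>rd_Y D'. \<forall>y'\<in>rd_Y D'. g (y + y') = g y + g y') \<and>
     (\<forall>x\<in>rd_X D. \<forall>y\<in>rd_Y D'. rd_pair D' (f x) y = rd_pair D x (g y)) \<and>
     rd_R D' = {(f a, b') | a b b'. (a, b) \<in> rd_R D \<and> b' \<in> rd_Y D' \<and> g b' = b})"

text \<open>Roots of GSp_{2r} (paired with their coroots): simple roots
  f_i - f_{i+1}, 2 f_r - f_0 generate the root system
  +-(f_i - f_j), +-(f_i + f_j - f_0) (i<j), +-(2 f_i - f_0), with coroots
  +-(e_i - e_j), +-(e_i + e_j), +-e_i respectively.\<close>
definition GSp_pos_roots :: "nat \<Rightarrow> (vec \<times> vec) set" where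
  "GSp_pos_roots r =
     {(ev i - ev j, ev i - ev j) | i j. 1 \<le> i \<and> i < j \<and> j \<le> r}
   \<union> {(ev i + ev j - ev 0, ev i + ev j) | i j. 1 \<le> i \<and> i < j \<and> j \<le> r}
   \<union> {(smul 2 (ev i) - ev 0, ev i) | i. 1 \<le> i \<and> i \<le> r}"

definition GSp_roots :: "nat \<Rightarrow> (vec \<times> vec) set" where
  "GSp_roots r = GSp_pos_roots r \<union> (\<lambda>(a, b). (- a, - b)) ` GSp_pos_roots r"

definition GSp_datum :: "nat \<Rightarrow> rdatum" where
  "GSp_datum r = \<lparr>rd_dim = r + 1, rd_X = Zvec r, rd_Y = Zvec r, rd_R = GSp_roots r\<rparr>"

text \<open>PGSp_{2r} = GSp_{2r} / centre. The centre is the image of the cocharacter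
  z = 2 e_0 + e_1 + ... + e_r. Characters: those x with <x,z> = 0; cocharacters:
  Y / Z z, represented by the projection y |-> y - (y_0/2) z (which does not change
  the pairing with characters killing z).\<close>
definition zc :: "nat \<Rightarrow> vec" where
  "zc r = (\<lambda>i. if i = 0 then 2 else if i \<le> r then 1 else 0)"

definition proj_c :: "nat \<Rightarrow> vec \<Rightarrow> vec" where
  "proj_c r y = y - smul (y 0 / 2) (zc r)"

definition PGSp_datum :: "nat \<Rightarrow> rdatum" where
  "PGSp_datum r = \<lparr>rd_dim = r + 1,
     rd_X = {x \<in> Zvec r. (\<Sum>i\<le>r. x i * zc r i) = 0},
     rd_Y = proj_c r ` Zvec r,
     rd_R = {(a, proj_c r b) | a b. (a, b) \<in> GSp_roots r}\<rparr>"

definition times_Gm :: "rdatum \<Rightarrow> rdatum" where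
  "times_Gm D = \<lparr>rd_dim = rd_dim D + 1,
     rd_X = {x + smul (of_int c) (ev (rd_dim D)) | x c. x \<in> rd_X D},
     rd_Y = {y + smul (of_int c) (ev (rd_dim D)) | y c. y \<in> rd_Y D},
     rd_R = rd_R D\<rparr>"

text \<open>The Weyl-invariant quadratic form Q_{kappa,nu} on Y = Z^{r+1} with
  Q(e_0) = kappa and Q(e_i) = nu: invariance forces B(e_i,e_j) = 0 for distinct
  i,j >= 1 and B(e_0,e_j) = -nu, whence the formula below.\<close>
definition Qform :: "int \<Rightarrow> int \<Rightarrow> nat \<Rightarrow> vec \<Rightarrow> rat" where
  "Qform \<kappa> \<nu> r y = of_int \<kappa> * (y 0)^2 + of_int \<nu> * (\<Sum>i=1..r. (y i)^2)
                   - of_int \<nu> * y 0 * (\<Sum>i=1..r. y i)"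

definition betaQ :: "nat \<Rightarrow> (vec \<Rightarrow> rat) \<Rightarrow> vec \<Rightarrow> vec \<Rightarrow> rat" where
  "betaQ n Q y1 y2 = (Q (y1 + y2) - Q y1 - Q y2) / of_nat n"

definition YQn :: "nat \<Rightarrow> nat \<Rightarrow> (vec \<Rightarrow> rat) \<Rightarrow> vec set" where
  "YQn r n Q = {y \<in> Zvec r. \<forall>y'\<in>Zvec r. betaQ n Q y y' \<in> \<int>}"

definition XQn :: "nat \<Rightarrow> nat \<Rightarrow> (vec \<Rightarrow> rat) \<Rightarrow> vec set" where
  "XQn r n Q = {x. (\<forall>i>r. x i = 0) \<and> (\<forall>i. of_nat n * x i \<in> \<int>) \<and>
                   (\<forall>y\<in>YQn r n Q. (\<Sum>i\<le>r. x i * y i) \<in> \<int>)}"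

text \<open>n_phi = n / gcd(n, Q(phi^vee)), for a coroot b = phi^vee (Q is integral on Y).\<close>
definition n_phi :: "nat \<Rightarrow> (vec \<Rightarrow> rat) \<Rightarrow> vec \<Rightarrow> nat" where
  "n_phi n Q b = n div gcd n (nat \<bar>\<lfloor>Q b\<rfloor>\<bar>)"

definition cover_dual :: "nat \<Rightarrow> nat \<Rightarrow> (vec \<Rightarrow> rat) \<Rightarrow> rdatum" where
  "cover_dual r n Q = \<lparr>rd_dim = r + 1,
     rd_X = YQn r n Q,
     rd_Y = XQn r n Q,
     rd_R = {(smul (of_nat (n_phi n Q b)) b, smul (1 / of_nat (n_phi n Q b)) a)
             | a b. (a, b) \<in> GSp_roots r}\<rparr>"

end

theory Submission
  imports Defs
begin

text \<open>
  For Q = Q_{0,1} and n = 2 one computes that Y_{Q,2} consists of the integral y with y_0 and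
  y_1 + ... + y_r even, and X_{Q,2} of the half-integral x with x_i - x_1 integral for
  1 \<le> i \<le> r. Every coroot b of GSp_{2r} has b_0 = 0, and for every root a with coroot b the
  modified coroot a / n_b turns out to be the same linear function of b, namely
  \<lambda>(b) = (-(b_1 + ... + b_r)/2, b_1, ..., b_r). Hence an isomorphism of root data is given by a
  lattice isomorphism f from Y_{Q,2} onto the target character lattice with f(b) = \<lambda>(b), whose
  transpose is a lattice isomorphism sending the target coroot attached to b to \<lambda>(b).

  For odd r = 2k + 1 the map
  f(y) = (k y_0/2 - (y_1 + ... + y_r)/2, y_1 - y_0/2, ..., y_r - y_0/2) does this with target
  GSp_{2r}; it is its own transpose. For even r the coefficient (r - 1)/4 of y_0 destroys
  integrality; replacing it by r/4 makes f(y) orthogonal to the central cocharacter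
  2 e_0 + e_1 + ... + e_r, i.e. a character of PGSp_{2r}, and the lost information y_0/2 is
  recorded in the extra G_m factor.
\<close>

definition tail_sum :: "nat \<Rightarrow> vec \<Rightarrow> rat" where
  "tail_sum r y = (\<Sum>i=1..r. y i)"

definition dual_coroot :: "nat \<Rightarrow> vec \<Rightarrow> vec" where
  "dual_coroot r b = (\<lambda>l. if l = 0 then - tail_sum r b / 2 else b l)"

lemma ev_apply [simp]: "ev i j = (if j = i then 1 else 0)"
  by (simp add: ev_def)

lemma sum_mult_delta [simp]:
  "finite A \<Longrightarrow> (\<Sum>l\<in>A. x l * (if l = i then 1 else 0)) = (if i \<in> A then x i else (0::rat))"
proof -
  assume "finite A"
  have "(\<Sum>l\<in>A. x l * (if l = i then 1 else 0)) = (\<Sum>l\<in>A. if l = i then x l else 0)"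
    by (intro sum.cong) auto
  with \<open>finite A\<close> show ?thesis
    by simp
qed

lemma sum_atMost_split_zero: "(\<Sum>i\<le>(r::nat). F i) = F 0 + (\<Sum>i=1..r. (F i :: rat))"
  by (subst atMost_atLeast0, subst sum.atLeast_Suc_atMost) auto

lemma tail_sum_add [simp]: "tail_sum r (x + y) = tail_sum r x + tail_sum r y"
  by (simp add: tail_sum_def sum.distrib)

lemma tail_sum_diff [simp]: "tail_sum r (x - y) = tail_sum r x - tail_sum r y"
  by (simp add: tail_sum_def sum_subtractf)

lemma tail_sum_ev [simp]: "tail_sum r (ev i) = (if 1 \<le> i \<and> i \<le> r then 1 else 0)"
  by (simp add: tail_sum_def)

lemma tail_sum_uminus [simp]: "tail_sum r (- y) = - tail_sum r y"
  by (simp add: tail_sum_def sum_negf)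

lemma tail_sum_scale: "tail_sum r (\<lambda>i. c * y i) = c * tail_sum r y"
  by (simp add: tail_sum_def sum_distrib_left)

lemma tail_sum_Ints: "(\<And>i. y i \<in> \<int>) \<Longrightarrow> tail_sum r y \<in> \<int>"
  by (auto simp: tail_sum_def)

lemma tail_sum_restrict:
  "tail_sum r (\<lambda>l. if l = 0 then A else if l \<le> r then F l else B l) = (\<Sum>l=1..r. F l)"
  unfolding tail_sum_def by (intro sum.cong) auto

lemma sum_diff_const: "(\<Sum>l=1..r. y l - c) = tail_sum r y - of_nat r * c"
  by (simp add: tail_sum_def sum_subtractf)

lemma sum_add_const: "(\<Sum>l=1..r. y l + c) = tail_sum r y + of_nat r * c"
  by (simp add: tail_sum_def sum.distrib)

lemma sum_diff_const_mult: "(\<Sum>l=1..r. (x l - c) * y l) = (\<Sum>l=1..r. x l * y l) - c * tail_sum r y"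
  by (simp add: tail_sum_def left_diff_distrib sum_subtractf sum_distrib_left)

lemma sum_mult_diff_const: "(\<Sum>l=1..r. x l * (y l - c)) = (\<Sum>l=1..r. x l * y l) - c * tail_sum r x"
  by (simp add: tail_sum_def right_diff_distrib sum_subtractf sum_distrib_left mult.commute)

lemma ZvecI: "(\<And>i. x i \<in> \<int>) \<Longrightarrow> (\<And>i. r < i \<Longrightarrow> x i = 0) \<Longrightarrow> x \<in> Zvec r"
  by (auto simp: Zvec_def)

lemma Zvec_Ints: "x \<in> Zvec r \<Longrightarrow> x i \<in> \<int>"
  by (simp add: Zvec_def)

lemma ev_in_Zvec: "i \<le> r \<Longrightarrow> ev i \<in> Zvec r"
  by (auto simp: Zvec_def)

subsection \<open>The lattices Y_{Q,2} and X_{Q,2} for Q = Q_{0,1}\<close>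

lemma Qform_0_1: "Qform 0 1 r y = (\<Sum>i=1..r. (y i)\<^sup>2) - y 0 * tail_sum r y"
  by (simp add: Qform_def tail_sum_def)

lemma Qform_uminus: "Qform \<kappa> \<nu> r (- y) = Qform \<kappa> \<nu> r y"
  by (simp add: Qform_def sum_negf)

lemma betaQ_Qform_0_1:
  "betaQ 2 (Qform 0 1 r) y y' =
     (\<Sum>i=1..r. y i * y' i) - (y 0 * tail_sum r y' + y' 0 * tail_sum r y) / 2"
proof -
  have "(\<Sum>i=1..r. (y i + y' i)\<^sup>2) =
      (\<Sum>i=1..r. (y i)\<^sup>2) + 2 * (\<Sum>i=1..r. y i * y' i) + (\<Sum>i=1..r. (y' i)\<^sup>2)"
    by (simp add: power2_sum sum.distrib sum_distrib_left mult.assoc)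
  then have "Qform 0 1 r (y + y') - Qform 0 1 r y - Qform 0 1 r y' =
      2 * (\<Sum>i=1..r. y i * y' i) - (y 0 * tail_sum r y' + y' 0 * tail_sum r y)"
    by (simp add: Qform_0_1 algebra_simps)
  then show ?thesis
    by (simp add: betaQ_def diff_divide_distrib)
qed

lemma YQn_Qform_0_1:
  assumes "0 < r"
  shows "YQn r 2 (Qform 0 1 r) = {y \<in> Zvec r. y 0 / 2 \<in> \<int> \<and> tail_sum r y / 2 \<in> \<int>}"
proof (intro set_eqI iffI)
  fix y assume "y \<in> YQn r 2 (Qform 0 1 r)"
  then have y: "y \<in> Zvec r" and \<beta>: "\<And>y'. y' \<in> Zvec r \<Longrightarrow> betaQ 2 (Qform 0 1 r) y y' \<in> \<int>"
    by (auto simp: YQn_def)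
  have "- (tail_sum r y / 2) \<in> \<int>"
    using \<beta>[OF ev_in_Zvec[of 0]] by (simp add: betaQ_Qform_0_1)
  then have sum: "tail_sum r y / 2 \<in> \<int>"
    using Ints_minus by fastforce
  have "y 1 - y 0 / 2 \<in> \<int>"
    using \<beta>[OF ev_in_Zvec[of 1]] assms by (simp add: betaQ_Qform_0_1)
  from Ints_diff[OF Zvec_Ints[where i = 1, OF y] this] have "y 0 / 2 \<in> \<int>"
    by simp
  with y sum show "y \<in> {y \<in> Zvec r. y 0 / 2 \<in> \<int> \<and> tail_sum r y / 2 \<in> \<int>}"
    by auto
next
  fix y assume "y \<in> {y \<in> Zvec r. y 0 / 2 \<in> \<int> \<and> tail_sum r y / 2 \<in> \<int>}"
  then have y: "y \<in> Zvec r" and y0: "y 0 / 2 \<in> \<int>" and sum: "tail_sum r y / 2 \<in> \<int>"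
    by auto
  have "betaQ 2 (Qform 0 1 r) y y' \<in> \<int>" if y': "y' \<in> Zvec r" for y'
  proof -
    have "betaQ 2 (Qform 0 1 r) y y' =
        (\<Sum>i=1..r. y i * y' i) - ((y 0 / 2) * tail_sum r y' + y' 0 * (tail_sum r y / 2))"
      by (simp add: betaQ_Qform_0_1 field_simps)
    moreover have "tail_sum r y' \<in> \<int>" "y' 0 \<in> \<int>" "(\<Sum>i=1..r. y i * y' i) \<in> \<int>"
      using y y' by (auto simp: Zvec_def intro!: tail_sum_Ints Ints_sum Ints_mult)
    ultimately show ?thesis
      using y0 sum by (simp only:) (intro Ints_diff Ints_add Ints_mult)
  qed
  with y show "y \<in> YQn r 2 (Qform 0 1 r)"
    by (simp add: YQn_def)
qed

lemma XQn_Qform_0_1: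
  assumes "0 < r"
  shows "XQn r 2 (Qform 0 1 r) =
    {x. (\<forall>i>r. x i = 0) \<and> (\<forall>i. 2 * x i \<in> \<int>) \<and> (\<forall>i\<in>{1..r}. x i - x 1 \<in> \<int>)}"
proof (intro set_eqI iffI)
  fix x assume x: "x \<in> XQn r 2 (Qform 0 1 r)"
  have "x i - x 1 \<in> \<int>" if i: "i \<in> {1..r}" for i
  proof -
    have "ev i - ev 1 \<in> YQn r 2 (Qform 0 1 r)"
      using i assms by (auto simp: YQn_Qform_0_1 Zvec_def)
    then have "(\<Sum>l\<le>r. x l * (ev i - ev 1) l) \<in> \<int>"
      using x by (auto simp: XQn_def)
    moreover have "(\<Sum>l\<le>r. x l * (ev i - ev 1) l) = x i - x 1"
      using i assms by (simp add: right_diff_distrib sum_subtractf)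
    ultimately show ?thesis
      by simp
  qed
  with x show "x \<in> {x. (\<forall>i>r. x i = 0) \<and> (\<forall>i. 2 * x i \<in> \<int>) \<and> (\<forall>i\<in>{1..r}. x i - x 1 \<in> \<int>)}"
    by (auto simp: XQn_def)
next
  fix x :: vec
  assume "x \<in> {x. (\<forall>i>r. x i = 0) \<and> (\<forall>i. 2 * x i \<in> \<int>) \<and> (\<forall>i\<in>{1..r}. x i - x 1 \<in> \<int>)}"
  then have supp: "\<forall>i>r. x i = 0" and half: "\<And>i. 2 * x i \<in> \<int>"
    and offset: "\<And>i. i \<in> {1..r} \<Longrightarrow> x i - x 1 \<in> \<int>"
    by auto
  have "(\<Sum>i\<le>r. x i * y i) \<in> \<int>" if "y \<in> YQn r 2 (Qform 0 1 r)" for y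
  proof -
    from that have y: "y \<in> Zvec r" and y0: "y 0 / 2 \<in> \<int>" and sum: "tail_sum r y / 2 \<in> \<int>"
      by (auto simp: YQn_Qform_0_1[OF assms])
    have "(\<Sum>i\<le>r. x i * y i) =
        (2 * x 0) * (y 0 / 2) + (\<Sum>i=1..r. (x i - x 1) * y i) + (2 * x 1) * (tail_sum r y / 2)"
      unfolding sum_atMost_split_zero sum_diff_const_mult by simp
    moreover have "(\<Sum>i=1..r. (x i - x 1) * y i) \<in> \<int>"
      using offset y by (intro Ints_sum Ints_mult) (auto simp: Zvec_Ints)
    ultimately show ?thesis
      using Ints_mult[OF half y0] Ints_mult[OF half sum] by (simp add: Ints_add)
  qed
  with supp half show "x \<in> XQn r 2 (Qform 0 1 r)"
    by (simp add: XQn_def)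
qed

lemma XQn_Qform_0_1_tail_sum:
  assumes "0 < r" "x \<in> XQn r 2 (Qform 0 1 r)"
  shows "tail_sum r x - of_nat r * x 1 \<in> \<int>"
proof -
  have "tail_sum r x - of_nat r * x 1 = (\<Sum>l=1..r. x l - x 1)"
    by (simp only: sum_diff_const)
  then show ?thesis
    using assms by (auto simp: XQn_Qform_0_1)
qed

subsection \<open>The roots of the dual group\<close>

lemma GSp_pos_root_rescaled:
  assumes "(a, b) \<in> GSp_pos_roots r"
  shows "b \<in> Zvec r \<and> b 0 = 0 \<and> 0 < n_phi 2 (Qform 0 1 r) b \<and>
    a = smul (of_nat (n_phi 2 (Qform 0 1 r) b)) (dual_coroot r b)"
  using assms unfolding GSp_pos_roots_def
proof (elim UnE CollectE exE conjE)
  fix i j assume "(a, b) = (ev i - ev j, ev i - ev j)" and ij: "1 \<le> i" "i < j" "j \<le> r"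
  then have ab: "a = ev i - ev j" "b = ev i - ev j"
    by auto
  have "(\<Sum>l=1..r. ((if l = i then 1 else 0) - (if l = j then 1 else 0))\<^sup>2) =
      (\<Sum>l=1..r. (if l = i then 1 else 0) + (if l = j then 1 else (0::rat)))"
    using ij by (intro sum.cong) auto
  then have "Qform 0 1 r b = 2"
    using ij unfolding ab by (simp add: Qform_0_1 sum.distrib)
  with ij show ?thesis
    unfolding ab by (auto simp: n_phi_def Zvec_def dual_coroot_def smul_def fun_eq_iff)
next
  fix i j assume "(a, b) = (ev i + ev j - ev 0, ev i + ev j)" and ij: "1 \<le> i" "i < j" "j \<le> r"
  then have ab: "a = ev i + ev j - ev 0" "b = ev i + ev j"
    by auto
  have "(\<Sum>l=1..r. ((if l = i then 1 else 0) + (if l = j then 1 else 0))\<^sup>2) =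
      (\<Sum>l=1..r. (if l = i then 1 else 0) + (if l = j then 1 else (0::rat)))"
    using ij by (intro sum.cong) auto
  then have "Qform 0 1 r b = 2"
    using ij unfolding ab by (simp add: Qform_0_1 sum.distrib)
  with ij show ?thesis
    unfolding ab by (auto simp: n_phi_def Zvec_def dual_coroot_def smul_def fun_eq_iff)
next
  fix i assume "(a, b) = (smul 2 (ev i) - ev 0, ev i)" and i: "1 \<le> i" "i \<le> r"
  then have ab: "a = smul 2 (ev i) - ev 0" "b = ev i"
    by auto
  have "(\<Sum>l=1..r. (if l = i then 1 else 0)\<^sup>2) = (\<Sum>l=1..r. if l = i then 1 else (0::rat))"
    by (intro sum.cong) auto
  then have "Qform 0 1 r b = 1"
    using i unfolding ab by (simp add: Qform_0_1)
  with i show ?thesis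
    unfolding ab by (auto simp: n_phi_def Zvec_def dual_coroot_def smul_def fun_eq_iff)
qed

lemma GSp_root_rescaled:
  assumes "(a, b) \<in> GSp_roots r"
  shows "b \<in> Zvec r \<and> b 0 = 0 \<and> 0 < n_phi 2 (Qform 0 1 r) b \<and>
    a = smul (of_nat (n_phi 2 (Qform 0 1 r) b)) (dual_coroot r b)"
proof -
  have "n_phi 2 (Qform 0 1 r) (- b) = n_phi 2 (Qform 0 1 r) b" for b
    by (simp add: n_phi_def Qform_uminus)
  moreover have "dual_coroot r (- b) = - dual_coroot r b" for b
    by (simp add: dual_coroot_def fun_eq_iff)
  ultimately show ?thesis
    using assms GSp_pos_root_rescaled unfolding GSp_roots_def
    by (fastforce simp: Zvec_def smul_def)
qed

lemma rd_R_cover_dual_Qform_0_1: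
  "rd_R (cover_dual r 2 (Qform 0 1 r)) =
    {(smul (of_nat (n_phi 2 (Qform 0 1 r) b)) b, dual_coroot r b) | a b. (a, b) \<in> GSp_roots r}"
proof -
  have "smul (1 / of_nat (n_phi 2 (Qform 0 1 r) b)) a = dual_coroot r b"
    if "(a, b) \<in> GSp_roots r" for a b
    using GSp_root_rescaled[OF that] by (auto simp: smul_def fun_eq_iff)
  then show ?thesis
    unfolding cover_dual_def rdatum.simps by (intro Collect_cong) metis
qed

text \<open>
  Since all roots of the dual have the form (n_b b, \<lambda>(b)), an isomorphism only has to be
  checked on the coroots b of GSp_{2r}, all of which lie in the hyperplane b_0 = 0.
\<close>

lemma rd_iso_cover_dual_Qform_0_1I:
  fixes D :: rdatum and f h g k P :: "vec \<Rightarrow> vec"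
  assumes char: "f ` YQn r 2 (Qform 0 1 r) \<subseteq> rd_X D" "h ` rd_X D \<subseteq> YQn r 2 (Qform 0 1 r)"
      "\<And>y. y \<in> YQn r 2 (Qform 0 1 r) \<Longrightarrow> h (f y) = y" "\<And>x. x \<in> rd_X D \<Longrightarrow> f (h x) = x"
    and cochar: "g ` rd_Y D \<subseteq> XQn r 2 (Qform 0 1 r)" "k ` XQn r 2 (Qform 0 1 r) \<subseteq> rd_Y D"
      "\<And>w. w \<in> rd_Y D \<Longrightarrow> k (g w) = w" "\<And>x. x \<in> XQn r 2 (Qform 0 1 r) \<Longrightarrow> g (k x) = x"
    and f_add: "\<And>x y. f (x + y) = f x + f y" and f_smul: "\<And>c x. f (smul c x) = smul c (f x)"
    and g_add: "\<And>x y. g (x + y) = g x + g y"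
    and transpose: "\<And>x w. rd_pair D (f x) w = rd_pair (cover_dual r 2 (Qform 0 1 r)) x (g w)"
    and roots: "rd_R D = {(a, P b) | a b. (a, b) \<in> GSp_roots r}"
    and coroots: "\<And>b. b \<in> Zvec r \<Longrightarrow> b 0 = 0 \<Longrightarrow>
      P b \<in> rd_Y D \<and> f b = dual_coroot r b \<and> g (P b) = dual_coroot r b"
  shows "rd_iso (cover_dual r 2 (Qform 0 1 r)) D"
proof -
  let ?C = "cover_dual r 2 (Qform 0 1 r)"
  let ?n = "\<lambda>b. of_nat (n_phi 2 (Qform 0 1 r) b) :: rat"
  have bij_f: "bij_betw f (rd_X ?C) (rd_X D)"
    using char by (auto simp: cover_dual_def intro!: bij_betw_byWitness[where f' = h])
  have bij_g: "bij_betw g (rd_Y D) (rd_Y ?C)"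
    using cochar by (auto simp: cover_dual_def intro!: bij_betw_byWitness[where f' = k])
  have roots_eq: "rd_R D = {(f a, b') | a b b'. (a, b) \<in> rd_R ?C \<and> b' \<in> rd_Y D \<and> g b' = b}"
  proof (intro set_eqI iffI)
    fix z assume "z \<in> rd_R D"
    then obtain a b where z: "z = (a, P b)" and ab: "(a, b) \<in> GSp_roots r"
      using roots by auto
    from GSp_root_rescaled[OF ab] coroots f_smul
    have "f (smul (?n b) b) = a" "P b \<in> rd_Y D" "g (P b) = dual_coroot r b"
      by auto
    moreover have "(smul (?n b) b, dual_coroot r b) \<in> rd_R ?C"
      using ab by (auto simp: rd_R_cover_dual_Qform_0_1)
    ultimately show "z \<in> {(f a, b') | a b b'. (a, b) \<in> rd_R ?C \<and> b' \<in> rd_Y D \<and> g b' = b}"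
      using z by blast
  next
    fix z assume "z \<in> {(f a, b') | a b b'. (a, b) \<in> rd_R ?C \<and> b' \<in> rd_Y D \<and> g b' = b}"
    then obtain a b b' where z: "z = (f (smul (?n b) b), b')" and ab: "(a, b) \<in> GSp_roots r"
      and b': "b' \<in> rd_Y D" "g b' = dual_coroot r b"
      by (auto simp: rd_R_cover_dual_Qform_0_1)
    from GSp_root_rescaled[OF ab] coroots f_smul
    have "f (smul (?n b) b) = a" "P b \<in> rd_Y D" "g (P b) = dual_coroot r b"
      by auto
    moreover have "b' = P b"
      using cochar(3)[OF b'(1)] cochar(3)[OF \<open>P b \<in> rd_Y D\<close>] b'(2) \<open>g (P b) = dual_coroot r b\<close>
      by simp
    ultimately show "z \<in> rd_R D"
      using z ab roots by auto
  qed
  show ?thesis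
    unfolding rd_iso_def
    by (intro exI[of _ f] exI[of _ g] conjI ballI f_add g_add transpose bij_f bij_g roots_eq)
qed

subsection \<open>Odd rank: the dual group is GSp_{2r}\<close>

definition odd_iso :: "nat \<Rightarrow> vec \<Rightarrow> vec" where
  "odd_iso r y = (\<lambda>l. if l = 0 then (of_nat r - 1) / 4 * y 0 - tail_sum r y / 2
     else if l \<le> r then y l - y 0 / 2 else 0)"

definition odd_iso_inv :: "nat \<Rightarrow> vec \<Rightarrow> vec" where
  "odd_iso_inv r x = (\<lambda>l. if l = 0 then - 2 * (2 * x 0 + tail_sum r x)
     else if l \<le> r then x l - (2 * x 0 + tail_sum r x) else 0)"

lemma tail_sum_odd_iso: "tail_sum r (odd_iso r y) = tail_sum r y - of_nat r * (y 0 / 2)"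
  unfolding odd_iso_def tail_sum_restrict sum_diff_const ..

lemma tail_sum_odd_iso_inv:
  "tail_sum r (odd_iso_inv r x) = tail_sum r x - of_nat r * (2 * x 0 + tail_sum r x)"
  unfolding odd_iso_inv_def tail_sum_restrict sum_diff_const ..

lemma odd_iso_add: "odd_iso r (x + y) = odd_iso r x + odd_iso r y"
  by (simp add: odd_iso_def fun_eq_iff field_simps)

lemma odd_iso_smul: "odd_iso r (smul c y) = smul c (odd_iso r y)"
  by (simp add: odd_iso_def smul_def fun_eq_iff field_simps tail_sum_scale)

lemma odd_iso_dual_coroot: "b \<in> Zvec r \<Longrightarrow> b 0 = 0 \<Longrightarrow> odd_iso r b = dual_coroot r b"
  by (auto simp: odd_iso_def dual_coroot_def Zvec_def fun_eq_iff)

lemma odd_iso_inv_odd_iso: "\<forall>i>r. y i = 0 \<Longrightarrow> odd_iso_inv r (odd_iso r y) = y"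
proof
  fix l assume "\<forall>i>r. y i = 0"
  moreover have "2 * odd_iso r y 0 + tail_sum r (odd_iso r y) = - (y 0 / 2)"
    unfolding tail_sum_odd_iso by (simp add: odd_iso_def field_simps)
  ultimately show "odd_iso_inv r (odd_iso r y) l = y l"
    by (simp add: odd_iso_inv_def odd_iso_def)
qed

lemma odd_iso_odd_iso_inv: "\<forall>i>r. x i = 0 \<Longrightarrow> odd_iso r (odd_iso_inv r x) = x"
proof
  fix l assume "\<forall>i>r. x i = 0"
  moreover have "odd_iso_inv r x 0 = - 2 * (2 * x 0 + tail_sum r x)"
    by (simp add: odd_iso_inv_def)
  ultimately show "odd_iso r (odd_iso_inv r x) l = x l"
    unfolding odd_iso_def tail_sum_odd_iso_inv by (auto simp: odd_iso_inv_def field_simps)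
qed

lemma odd_iso_transpose: "(\<Sum>i\<le>r. odd_iso r x i * y i) = (\<Sum>i\<le>r. x i * odd_iso r y i)"
proof -
  have "(\<Sum>l=1..r. odd_iso r x l * y l) = (\<Sum>l=1..r. (x l - x 0 / 2) * y l)"
       "(\<Sum>l=1..r. x l * odd_iso r y l) = (\<Sum>l=1..r. x l * (y l - y 0 / 2))"
    by (auto simp: odd_iso_def intro!: sum.cong)
  then show ?thesis
    unfolding sum_atMost_split_zero sum_diff_const_mult sum_mult_diff_const
    by (simp add: odd_iso_def field_simps)
qed

context
  fixes r :: nat
  assumes odd: "odd r"
begin

lemma odd_rank_eq: "(of_nat r :: rat) = 2 * of_nat ((r - 1) div 2) + 1"
  using odd by (elim oddE) simp

lemma odd_iso_0: "odd_iso r y 0 = of_nat ((r - 1) div 2) * (y 0 / 2) - tail_sum r y / 2"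
  by (simp add: odd_iso_def odd_rank_eq field_simps)

lemma odd_iso_YQn: "y \<in> YQn r 2 (Qform 0 1 r) \<Longrightarrow> odd_iso r y \<in> Zvec r"
proof (rule ZvecI)
  fix i assume "y \<in> YQn r 2 (Qform 0 1 r)"
  then have y: "\<And>j. y j \<in> \<int>" and y0: "y 0 / 2 \<in> \<int>" and sum: "tail_sum r y / 2 \<in> \<int>"
    using odd_pos[OF odd] by (auto simp: YQn_Qform_0_1 Zvec_def)
  show "odd_iso r y i \<in> \<int>"
  proof (cases "i = 0")
    case True
    show ?thesis
      unfolding True odd_iso_0 by (intro Ints_diff Ints_mult Ints_of_nat y0 sum)
  qed (auto simp: odd_iso_def intro!: Ints_diff Ints_mult y y0)
qed (simp add: odd_iso_def)

lemma odd_iso_inv_Zvec: "x \<in> Zvec r \<Longrightarrow> odd_iso_inv r x \<in> YQn r 2 (Qform 0 1 r)"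
proof -
  assume "x \<in> Zvec r"
  then have x: "\<And>j. x j \<in> \<int>"
    by (rule Zvec_Ints)
  then have sum: "tail_sum r x \<in> \<int>"
    by (rule tail_sum_Ints)
  have "odd_iso_inv r x \<in> Zvec r"
    by (rule ZvecI) (auto simp: odd_iso_inv_def intro!: Ints_diff Ints_add Ints_mult x sum)
  moreover have "odd_iso_inv r x 0 / 2 \<in> \<int>"
  proof -
    have "odd_iso_inv r x 0 / 2 = - (2 * x 0 + tail_sum r x)"
      by (simp add: odd_iso_inv_def)
    then show ?thesis
      by (simp only:) (intro Ints_minus Ints_add Ints_mult Ints_numeral x sum)
  qed
  moreover have "tail_sum r (odd_iso_inv r x) / 2 \<in> \<int>"
  proof -
    have "tail_sum r (odd_iso_inv r x) / 2 =
        - (of_nat ((r - 1) div 2) * tail_sum r x) - of_nat r * x 0"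
      unfolding tail_sum_odd_iso_inv by (simp add: odd_rank_eq field_simps)
    then show ?thesis
      by (simp only:) (intro Ints_minus Ints_diff Ints_mult Ints_of_nat x sum)
  qed
  ultimately show ?thesis
    using odd_pos[OF odd] by (simp add: YQn_Qform_0_1)
qed

lemma odd_iso_Zvec: "y \<in> Zvec r \<Longrightarrow> odd_iso r y \<in> XQn r 2 (Qform 0 1 r)"
proof -
  assume "y \<in> Zvec r"
  then have y: "\<And>j. y j \<in> \<int>"
    by (rule Zvec_Ints)
  have "2 * odd_iso r y i \<in> \<int>" for i
  proof (cases "i = 0")
    case True
    have "2 * odd_iso r y 0 = of_nat ((r - 1) div 2) * y 0 - tail_sum r y"
      by (simp add: odd_iso_0 field_simps)
    then show ?thesis
      unfolding True by (simp only:) (intro Ints_diff Ints_mult Ints_of_nat y tail_sum_Ints)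
  qed (auto simp: odd_iso_def intro!: Ints_diff Ints_mult y)
  moreover have "odd_iso r y i - odd_iso r y 1 \<in> \<int>" if "i \<in> {1..r}" for i
    using that y by (auto simp: odd_iso_def)
  ultimately show ?thesis
    using odd_pos[OF odd] by (auto simp: XQn_Qform_0_1 odd_iso_def)
qed

lemma odd_iso_inv_XQn: "x \<in> XQn r 2 (Qform 0 1 r) \<Longrightarrow> odd_iso_inv r x \<in> Zvec r"
proof (rule ZvecI)
  fix i assume x: "x \<in> XQn r 2 (Qform 0 1 r)"
  then have half: "\<And>j. 2 * x j \<in> \<int>" and offset: "\<And>j. j \<in> {1..r} \<Longrightarrow> x j - x 1 \<in> \<int>"
    using odd_pos[OF odd] by (auto simp: XQn_Qform_0_1)
  define t where "t = tail_sum r x - of_nat r * x 1"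
  have t: "t \<in> \<int>"
    unfolding t_def using odd_pos[OF odd] x by (rule XQn_Qform_0_1_tail_sum)
  show "odd_iso_inv r x i \<in> \<int>"
  proof (cases "i = 0")
    case True
    have "odd_iso_inv r x 0 = - 2 * (2 * x 0) - 2 * t - of_nat r * (2 * x 1)"
      by (simp add: odd_iso_inv_def t_def field_simps)
    then show ?thesis
      unfolding True by (simp only:) (rule half t Ints_diff Ints_mult Ints_minus Ints_numeral Ints_of_nat)+
  next
    case False
    show ?thesis
    proof (cases "i \<le> r")
      case True
      with False have offset_i: "x i - x 1 \<in> \<int>"
        by (intro offset) simp
      from False True have "odd_iso_inv r x i =
          (x i - x 1) - 2 * x 0 - t - of_nat ((r - 1) div 2) * (2 * x 1)"
        by (simp add: odd_iso_inv_def t_def odd_rank_eq field_simps)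
      then show ?thesis
        by (simp only:) (rule offset_i half t Ints_diff Ints_mult Ints_of_nat)+
    qed (simp add: odd_iso_inv_def)
  qed
qed (simp add: odd_iso_inv_def)

lemma cover_dual_Qform_0_1_odd: "rd_iso (cover_dual r 2 (Qform 0 1 r)) (GSp_datum r)"
proof (rule rd_iso_cover_dual_Qform_0_1I[where f = "odd_iso r" and h = "odd_iso_inv r"
      and g = "odd_iso r" and k = "odd_iso_inv r" and P = id])
  show "odd_iso r ` YQn r 2 (Qform 0 1 r) \<subseteq> rd_X (GSp_datum r)"
    using odd_iso_YQn by (auto simp: GSp_datum_def)
  show "odd_iso_inv r ` rd_X (GSp_datum r) \<subseteq> YQn r 2 (Qform 0 1 r)"
    using odd_iso_inv_Zvec by (auto simp: GSp_datum_def)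
  show "odd_iso r ` rd_Y (GSp_datum r) \<subseteq> XQn r 2 (Qform 0 1 r)"
    using odd_iso_Zvec by (auto simp: GSp_datum_def)
  show "odd_iso_inv r ` XQn r 2 (Qform 0 1 r) \<subseteq> rd_Y (GSp_datum r)"
    using odd_iso_inv_XQn by (auto simp: GSp_datum_def)
  show "odd_iso_inv r (odd_iso r y) = y" if "y \<in> YQn r 2 (Qform 0 1 r)" for y
    using that by (intro odd_iso_inv_odd_iso) (simp add: YQn_def Zvec_def)
  show "odd_iso r (odd_iso_inv r x) = x" if "x \<in> rd_X (GSp_datum r)" for x
    using that by (intro odd_iso_odd_iso_inv) (simp add: GSp_datum_def Zvec_def)
  show "odd_iso_inv r (odd_iso r y) = y" if "y \<in> rd_Y (GSp_datum r)" for y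
    using that by (intro odd_iso_inv_odd_iso) (simp add: GSp_datum_def Zvec_def)
  show "odd_iso r (odd_iso_inv r x) = x" if "x \<in> XQn r 2 (Qform 0 1 r)" for x
    using that by (intro odd_iso_odd_iso_inv) (simp add: XQn_def)
  show "rd_pair (GSp_datum r) (odd_iso r x) y =
      rd_pair (cover_dual r 2 (Qform 0 1 r)) x (odd_iso r y)" for x y
    using odd_iso_transpose
    by (simp add: rd_pair_def GSp_datum_def cover_dual_def lessThan_Suc_atMost[symmetric])
  show "rd_R (GSp_datum r) = {(a, id b) | a b. (a, b) \<in> GSp_roots r}"
    by (simp add: GSp_datum_def)
  show "id b \<in> rd_Y (GSp_datum r) \<and> odd_iso r b = dual_coroot r b \<and>
      odd_iso r (id b) = dual_coroot r b" if "b \<in> Zvec r" "b 0 = 0" for b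
    using that by (simp add: GSp_datum_def odd_iso_dual_coroot)
qed (simp_all add: odd_iso_add odd_iso_smul)

end

subsection \<open>Even rank: the dual group is PGSp_{2r} \<times> G_m\<close>

lemma sum_mult_zc: "(\<Sum>i\<le>r. x i * zc r i) = 2 * x 0 + tail_sum r x"
proof -
  have "(\<Sum>i=1..r. x i * zc r i) = tail_sum r x"
    unfolding tail_sum_def by (intro sum.cong) (auto simp: zc_def)
  then show ?thesis
    unfolding sum_atMost_split_zero by (simp add: zc_def)
qed

lemma rd_X_times_Gm_PGSp:
  "rd_X (times_Gm (PGSp_datum r)) =
    {z. (\<forall>i. z i \<in> \<int>) \<and> (\<forall>i>r+1. z i = 0) \<and> 2 * z 0 + tail_sum r z = 0}"
proof (intro set_eqI iffI)
  fix z assume "z \<in> rd_X (times_Gm (PGSp_datum r))"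
  then obtain x c where z: "z = x + smul (of_int c) (ev (r + 1))"
    and x: "x \<in> Zvec r" "2 * x 0 + tail_sum r x = 0"
    by (auto simp: times_Gm_def PGSp_datum_def sum_mult_zc)
  have z_apply: "z i = x i + (if i = r + 1 then of_int c else 0)" for i
    by (simp add: z smul_def)
  have "tail_sum r z = tail_sum r x"
    unfolding tail_sum_def z_apply by (intro sum.cong) auto
  with x show "z \<in> {z. (\<forall>i. z i \<in> \<int>) \<and> (\<forall>i>r+1. z i = 0) \<and> 2 * z 0 + tail_sum r z = 0}"
    by (auto simp: z_apply Zvec_def)
next
  fix z :: vec
  assume "z \<in> {z. (\<forall>i. z i \<in> \<int>) \<and> (\<forall>i>r+1. z i = 0) \<and> 2 * z 0 + tail_sum r z = 0}"
  then have z: "\<And>i. z i \<in> \<int>" "\<forall>i>r+1. z i = 0" "2 * z 0 + tail_sum r z = 0"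
    by auto
  from z(1)[of "r + 1"] obtain c where c: "z (r + 1) = of_int c"
    by (auto elim: Ints_cases)
  define x where "x = (\<lambda>i. if i = r + 1 then 0 else z i)"
  have "z = x + smul (of_int c) (ev (r + 1))"
    using c by (auto simp: x_def smul_def fun_eq_iff)
  moreover have "tail_sum r x = tail_sum r z"
    unfolding tail_sum_def x_def by (intro sum.cong) auto
  with z have "x \<in> {x \<in> Zvec r. (\<Sum>i\<le>r. x i * zc r i) = 0}"
    by (auto simp: x_def Zvec_def sum_mult_zc)
  ultimately show "z \<in> rd_X (times_Gm (PGSp_datum r))"
    unfolding times_Gm_def PGSp_datum_def rdatum.simps by blast
qed

lemma rd_Y_times_Gm_PGSp:
  assumes "0 < r"
  shows "rd_Y (times_Gm (PGSp_datum r)) =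
    {w. w 0 = 0 \<and> (\<forall>i>r+1. w i = 0) \<and> w (r + 1) \<in> \<int> \<and>
      (\<forall>i\<in>{1..r}. 2 * w i \<in> \<int> \<and> w i - w 1 \<in> \<int>)}"
proof (intro set_eqI iffI)
  fix w assume "w \<in> rd_Y (times_Gm (PGSp_datum r))"
  then obtain v c where w: "w = proj_c r v + smul (of_int c) (ev (r + 1))" and v: "v \<in> Zvec r"
    by (auto simp: times_Gm_def PGSp_datum_def)
  have w_apply: "w i = v i - v 0 / 2 * zc r i + (if i = r + 1 then of_int c else 0)" for i
    by (simp add: w smul_def proj_c_def)
  have "2 * w i = 2 * v i - v 0" "w i - w 1 = v i - v 1" if "i \<in> {1..r}" for i
    using that assms by (auto simp: w_apply zc_def)
  with v show "w \<in> {w. w 0 = 0 \<and> (\<forall>i>r+1. w i = 0) \<and> w (r + 1) \<in> \<int> \<and>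
      (\<forall>i\<in>{1..r}. 2 * w i \<in> \<int> \<and> w i - w 1 \<in> \<int>)}"
    by (auto simp: w_apply zc_def Zvec_def)
next
  fix w :: vec
  assume "w \<in> {w. w 0 = 0 \<and> (\<forall>i>r+1. w i = 0) \<and> w (r + 1) \<in> \<int> \<and>
      (\<forall>i\<in>{1..r}. 2 * w i \<in> \<int> \<and> w i - w 1 \<in> \<int>)}"
  then have w: "w 0 = 0" "\<forall>i>r+1. w i = 0" "w (r + 1) \<in> \<int>"
    and coords: "\<And>i. i \<in> {1..r} \<Longrightarrow> 2 * w i \<in> \<int> \<and> w i - w 1 \<in> \<int>"
    by auto
  from w(3) obtain c where c: "w (r + 1) = of_int c"
    by (auto elim: Ints_cases)
  define v where "v = (\<lambda>l. if l = 0 then - 2 * w 1 else if l \<le> r then w l - w 1 else 0)"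
  have "2 * w 1 \<in> \<int>"
    using coords[of 1] assms by auto
  with coords have "v \<in> Zvec r"
    by (auto simp: v_def Zvec_def)
  moreover have "w = proj_c r v + smul (of_int c) (ev (r + 1))"
    using w c by (auto simp: fun_eq_iff proj_c_def v_def zc_def smul_def)
  ultimately show "w \<in> rd_Y (times_Gm (PGSp_datum r))"
    by (auto simp: times_Gm_def PGSp_datum_def)
qed

definition even_char_iso :: "nat \<Rightarrow> vec \<Rightarrow> vec" where
  "even_char_iso r y = (\<lambda>l. if l = 0 then of_nat r / 4 * y 0 - tail_sum r y / 2
     else if l \<le> r then y l - y 0 / 2 else if l = r + 1 then y 0 / 2 else 0)"

definition even_char_iso_inv :: "nat \<Rightarrow> vec \<Rightarrow> vec" where
  "even_char_iso_inv r z = (\<lambda>l. if l = 0 then 2 * z (r + 1)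
     else if l \<le> r then z l + z (r + 1) else 0)"

definition even_cochar_iso :: "nat \<Rightarrow> vec \<Rightarrow> vec" where
  "even_cochar_iso r w = (\<lambda>l. if l = 0 then of_nat r / 4 * w 0 - tail_sum r w / 2 + w (r + 1) / 2
     else if l \<le> r then w l - w 0 / 2 else 0)"

definition even_cochar_iso_inv :: "nat \<Rightarrow> vec \<Rightarrow> vec" where
  "even_cochar_iso_inv r x = (\<lambda>l. if l = 0 then 0 else if l \<le> r then x l
     else if l = r + 1 then 2 * x 0 + tail_sum r x else 0)"

lemma tail_sum_even_char_iso:
  "tail_sum r (even_char_iso r y) = tail_sum r y - of_nat r * (y 0 / 2)"
  unfolding even_char_iso_def tail_sum_restrict sum_diff_const ..

lemma tail_sum_even_char_iso_inv:
  "tail_sum r (even_char_iso_inv r z) = tail_sum r z + of_nat r * z (r + 1)"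
  unfolding even_char_iso_inv_def tail_sum_restrict sum_add_const ..

lemma tail_sum_even_cochar_iso:
  "tail_sum r (even_cochar_iso r w) = tail_sum r w - of_nat r * (w 0 / 2)"
  unfolding even_cochar_iso_def tail_sum_restrict sum_diff_const ..

lemma tail_sum_even_cochar_iso_inv: "tail_sum r (even_cochar_iso_inv r x) = tail_sum r x"
  unfolding even_cochar_iso_inv_def tail_sum_restrict tail_sum_def ..

lemma even_char_iso_add: "even_char_iso r (x + y) = even_char_iso r x + even_char_iso r y"
  by (simp add: even_char_iso_def fun_eq_iff field_simps)

lemma even_char_iso_smul: "even_char_iso r (smul c y) = smul c (even_char_iso r y)"
  by (simp add: even_char_iso_def smul_def fun_eq_iff field_simps tail_sum_scale)

lemma even_cochar_iso_add: "even_cochar_iso r (x + y) = even_cochar_iso r x + even_cochar_iso r y"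
  by (simp add: even_cochar_iso_def fun_eq_iff field_simps)

lemma even_char_iso_dual_coroot:
  "b \<in> Zvec r \<Longrightarrow> b 0 = 0 \<Longrightarrow> even_char_iso r b = dual_coroot r b"
  by (auto simp: even_char_iso_def dual_coroot_def Zvec_def fun_eq_iff)

lemma even_cochar_iso_dual_coroot:
  "b \<in> Zvec r \<Longrightarrow> b 0 = 0 \<Longrightarrow> even_cochar_iso r b = dual_coroot r b"
  by (auto simp: even_cochar_iso_def dual_coroot_def Zvec_def fun_eq_iff)

lemma even_char_iso_inv_even_char_iso:
  "\<forall>i>r. y i = 0 \<Longrightarrow> even_char_iso_inv r (even_char_iso r y) = y"
  by (auto simp: even_char_iso_inv_def even_char_iso_def fun_eq_iff)

lemma even_char_iso_even_char_iso_inv: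
  assumes "2 * z 0 + tail_sum r z = 0" "\<forall>i>r+1. z i = 0"
  shows "even_char_iso r (even_char_iso_inv r z) = z"
proof
  fix l
  have "z 0 = - tail_sum r z / 2"
    using assms(1) by (simp add: field_simps)
  moreover have "even_char_iso_inv r z 0 = 2 * z (r + 1)"
    by (simp add: even_char_iso_inv_def)
  ultimately show "even_char_iso r (even_char_iso_inv r z) l = z l"
    using assms(2) unfolding even_char_iso_def tail_sum_even_char_iso_inv
    by (auto simp: even_char_iso_inv_def field_simps)
qed

lemma even_cochar_iso_inv_even_cochar_iso:
  assumes "w 0 = 0" "\<forall>i>r+1. w i = 0"
  shows "even_cochar_iso_inv r (even_cochar_iso r w) = w"
proof
  fix l
  have "even_cochar_iso r w 0 = - tail_sum r w / 2 + w (r + 1) / 2"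
    using assms by (simp add: even_cochar_iso_def)
  then show "even_cochar_iso_inv r (even_cochar_iso r w) l = w l"
    using assms unfolding even_cochar_iso_inv_def tail_sum_even_cochar_iso
    by (auto simp: even_cochar_iso_def field_simps)
qed

lemma even_cochar_iso_even_cochar_iso_inv:
  assumes "\<forall>i>r. x i = 0"
  shows "even_cochar_iso r (even_cochar_iso_inv r x) = x"
proof
  fix l
  have "even_cochar_iso_inv r x 0 = 0" "even_cochar_iso_inv r x (r + 1) = 2 * x 0 + tail_sum r x"
    by (auto simp: even_cochar_iso_inv_def)
  then show "even_cochar_iso r (even_cochar_iso_inv r x) l = x l"
    using assms unfolding even_cochar_iso_def tail_sum_even_cochar_iso_inv
    by (auto simp: even_cochar_iso_inv_def field_simps)
qed

lemma even_iso_transpose: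
  "(\<Sum>i<r + 2. even_char_iso r x i * w i) = (\<Sum>i<r + 1. x i * even_cochar_iso r w i)"
proof -
  have "(\<Sum>l=1..r. even_char_iso r x l * w l) = (\<Sum>l=1..r. (x l - x 0 / 2) * w l)"
       "(\<Sum>l=1..r. x l * even_cochar_iso r w l) = (\<Sum>l=1..r. x l * (w l - w 0 / 2))"
    by (auto simp: even_char_iso_def even_cochar_iso_def intro!: sum.cong)
  moreover have "(\<Sum>i<r + 2. even_char_iso r x i * w i) =
      even_char_iso r x 0 * w 0 + (\<Sum>l=1..r. even_char_iso r x l * w l) + x 0 / 2 * w (r + 1)"
    by (simp add: lessThan_Suc_atMost sum_atMost_split_zero even_char_iso_def)
  moreover have "(\<Sum>i<r + 1. x i * even_cochar_iso r w i) =
      x 0 * even_cochar_iso r w 0 + (\<Sum>l=1..r. x l * even_cochar_iso r w l)"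
    by (simp add: lessThan_Suc_atMost sum_atMost_split_zero)
  ultimately show ?thesis
    unfolding sum_diff_const_mult sum_mult_diff_const
    by (simp add: even_char_iso_def even_cochar_iso_def field_simps)
qed

context
  fixes r :: nat
  assumes even: "even r" and pos: "0 < r"
begin

lemma even_rank_eq: "(of_nat r :: rat) = 2 * of_nat (r div 2)"
  using even by (elim evenE) simp

lemma even_char_iso_YQn:
  "y \<in> YQn r 2 (Qform 0 1 r) \<Longrightarrow> even_char_iso r y \<in> rd_X (times_Gm (PGSp_datum r))"
proof -
  assume "y \<in> YQn r 2 (Qform 0 1 r)"
  then have y: "\<And>j. y j \<in> \<int>" and y0: "y 0 / 2 \<in> \<int>" and sum: "tail_sum r y / 2 \<in> \<int>"
    using pos by (auto simp: YQn_Qform_0_1 Zvec_def)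
  have "even_char_iso r y i \<in> \<int>" for i
  proof (cases "i = 0")
    case True
    have "even_char_iso r y 0 = of_nat (r div 2) * (y 0 / 2) - tail_sum r y / 2"
      by (simp add: even_char_iso_def even_rank_eq field_simps)
    then show ?thesis
      unfolding True by (simp only:) (rule y0 sum Ints_diff Ints_mult Ints_of_nat)+
  qed (auto simp: even_char_iso_def intro!: Ints_diff y y0)
  moreover have "2 * even_char_iso r y 0 + tail_sum r (even_char_iso r y) = 0"
    unfolding tail_sum_even_char_iso by (simp add: even_char_iso_def field_simps)
  ultimately show ?thesis
    unfolding rd_X_times_Gm_PGSp by (auto simp: even_char_iso_def)
qed

lemma even_char_iso_inv_X:
  "z \<in> rd_X (times_Gm (PGSp_datum r)) \<Longrightarrow> even_char_iso_inv r z \<in> YQn r 2 (Qform 0 1 r)"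
proof -
  assume "z \<in> rd_X (times_Gm (PGSp_datum r))"
  then have z: "\<And>i. z i \<in> \<int>" and central: "2 * z 0 + tail_sum r z = 0"
    unfolding rd_X_times_Gm_PGSp by auto
  have "even_char_iso_inv r z \<in> Zvec r"
    by (rule ZvecI) (auto simp: even_char_iso_inv_def intro!: Ints_add Ints_mult z)
  moreover have "even_char_iso_inv r z 0 / 2 = z (r + 1)"
    by (simp add: even_char_iso_inv_def)
  moreover have "tail_sum r (even_char_iso_inv r z) / 2 \<in> \<int>"
  proof -
    have "tail_sum r (even_char_iso_inv r z) / 2 = - z 0 + of_nat (r div 2) * z (r + 1)"
      unfolding tail_sum_even_char_iso_inv using central by (simp add: even_rank_eq field_simps)
    then show ?thesis
      by (simp only:) (rule z Ints_add Ints_minus Ints_mult Ints_of_nat)+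
  qed
  ultimately show ?thesis
    using pos z by (simp add: YQn_Qform_0_1)
qed

lemma even_cochar_iso_Y:
  "w \<in> rd_Y (times_Gm (PGSp_datum r)) \<Longrightarrow> even_cochar_iso r w \<in> XQn r 2 (Qform 0 1 r)"
proof -
  assume "w \<in> rd_Y (times_Gm (PGSp_datum r))"
  then have w: "w 0 = 0" "w (r + 1) \<in> \<int>"
    and coords: "\<And>i. i \<in> {1..r} \<Longrightarrow> 2 * w i \<in> \<int> \<and> w i - w 1 \<in> \<int>"
    unfolding rd_Y_times_Gm_PGSp[OF pos] by auto
  define t where "t = tail_sum r w - of_nat r * w 1"
  have t: "t \<in> \<int>"
    unfolding t_def sum_diff_const[symmetric] using coords by auto
  have w1: "2 * w 1 \<in> \<int>"
    using coords pos by auto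
  have "2 * even_cochar_iso r w i \<in> \<int>" for i
  proof (cases "i = 0")
    case True
    have "2 * even_cochar_iso r w 0 = w (r + 1) - t - of_nat (r div 2) * (2 * w 1)"
      using w by (simp add: even_cochar_iso_def t_def even_rank_eq field_simps)
    then show ?thesis
      unfolding True by (simp only:) (rule w(2) t w1 Ints_diff Ints_mult Ints_of_nat)+
  qed (use coords w in \<open>auto simp: even_cochar_iso_def\<close>)
  moreover have "even_cochar_iso r w i - even_cochar_iso r w 1 \<in> \<int>" if "i \<in> {1..r}" for i
    using that coords by (auto simp: even_cochar_iso_def)
  ultimately show ?thesis
    using pos by (auto simp: XQn_Qform_0_1 even_cochar_iso_def)
qed

lemma even_cochar_iso_inv_XQn:
  "x \<in> XQn r 2 (Qform 0 1 r) \<Longrightarrow> even_cochar_iso_inv r x \<in> rd_Y (times_Gm (PGSp_datum r))"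
proof -
  assume x: "x \<in> XQn r 2 (Qform 0 1 r)"
  then have half: "\<And>i. 2 * x i \<in> \<int>" and offset: "\<And>i. i \<in> {1..r} \<Longrightarrow> x i - x 1 \<in> \<int>"
    using pos by (auto simp: XQn_Qform_0_1)
  define t where "t = tail_sum r x - of_nat r * x 1"
  have t: "t \<in> \<int>"
    unfolding t_def using pos x by (rule XQn_Qform_0_1_tail_sum)
  have "even_cochar_iso_inv r x (r + 1) = 2 * x 0 + t + of_nat (r div 2) * (2 * x 1)"
    by (simp add: even_cochar_iso_inv_def t_def even_rank_eq field_simps)
  then have "even_cochar_iso_inv r x (r + 1) \<in> \<int>"
    by (simp only:) (rule half t Ints_add Ints_mult Ints_of_nat)+
  moreover have "2 * even_cochar_iso_inv r x i \<in> \<int> \<and>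
      even_cochar_iso_inv r x i - even_cochar_iso_inv r x 1 \<in> \<int>" if "i \<in> {1..r}" for i
    using that half offset by (auto simp: even_cochar_iso_inv_def)
  ultimately show ?thesis
    unfolding rd_Y_times_Gm_PGSp[OF pos] by (auto simp: even_cochar_iso_inv_def)
qed

lemma cover_dual_Qform_0_1_even:
  "rd_iso (cover_dual r 2 (Qform 0 1 r)) (times_Gm (PGSp_datum r))"
proof (rule rd_iso_cover_dual_Qform_0_1I[where f = "even_char_iso r" and h = "even_char_iso_inv r"
      and g = "even_cochar_iso r" and k = "even_cochar_iso_inv r" and P = "proj_c r"])
  show "even_char_iso r ` YQn r 2 (Qform 0 1 r) \<subseteq> rd_X (times_Gm (PGSp_datum r))"
    using even_char_iso_YQn by auto
  show "even_char_iso_inv r ` rd_X (times_Gm (PGSp_datum r)) \<subseteq> YQn r 2 (Qform 0 1 r)"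
    using even_char_iso_inv_X by auto
  show "even_cochar_iso r ` rd_Y (times_Gm (PGSp_datum r)) \<subseteq> XQn r 2 (Qform 0 1 r)"
    using even_cochar_iso_Y by auto
  show "even_cochar_iso_inv r ` XQn r 2 (Qform 0 1 r) \<subseteq> rd_Y (times_Gm (PGSp_datum r))"
    using even_cochar_iso_inv_XQn by auto
  show "even_char_iso_inv r (even_char_iso r y) = y" if "y \<in> YQn r 2 (Qform 0 1 r)" for y
    using that by (intro even_char_iso_inv_even_char_iso) (simp add: YQn_def Zvec_def)
  show "even_char_iso r (even_char_iso_inv r z) = z" if "z \<in> rd_X (times_Gm (PGSp_datum r))" for z
    using that by (intro even_char_iso_even_char_iso_inv) (simp_all add: rd_X_times_Gm_PGSp)
  show "even_cochar_iso_inv r (even_cochar_iso r w) = w" if "w \<in> rd_Y (times_Gm (PGSp_datum r))" for w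
    using that by (intro even_cochar_iso_inv_even_cochar_iso) (simp_all add: rd_Y_times_Gm_PGSp[OF pos])
  show "even_cochar_iso r (even_cochar_iso_inv r x) = x" if "x \<in> XQn r 2 (Qform 0 1 r)" for x
    using that by (intro even_cochar_iso_even_cochar_iso_inv) (simp add: XQn_def)
  show "rd_pair (times_Gm (PGSp_datum r)) (even_char_iso r x) w =
      rd_pair (cover_dual r 2 (Qform 0 1 r)) x (even_cochar_iso r w)" for x w
    using even_iso_transpose by (simp add: rd_pair_def times_Gm_def PGSp_datum_def cover_dual_def)
  show "rd_R (times_Gm (PGSp_datum r)) = {(a, proj_c r b) | a b. (a, b) \<in> GSp_roots r}"
    by (simp add: times_Gm_def PGSp_datum_def)
  show "proj_c r b \<in> rd_Y (times_Gm (PGSp_datum r)) \<and> even_char_iso r b = dual_coroot r b \<and>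
      even_cochar_iso r (proj_c r b) = dual_coroot r b" if "b \<in> Zvec r" "b 0 = 0" for b
  proof -
    have "proj_c r b = b"
      using that by (simp add: proj_c_def smul_def fun_eq_iff)
    moreover have "b \<in> rd_Y (times_Gm (PGSp_datum r))"
      using that by (auto simp: rd_Y_times_Gm_PGSp[OF pos] Zvec_def)
    ultimately show ?thesis
      using that by (simp add: even_char_iso_dual_coroot even_cochar_iso_dual_coroot)
  qed
qed (simp_all add: even_char_iso_add even_char_iso_smul even_cochar_iso_add)

end

theorem mainTheorem6:
  fixes r :: nat
  assumes "r \<ge> 1"
  shows "(odd r \<longrightarrow> rd_iso (cover_dual r 2 (Qform 0 1 r)) (GSp_datum r)) \<and>
         (even r \<longrightarrow> rd_iso (cover_dual r 2 (Qform 0 1 r)) (times_Gm (PGSp_datum r)))"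
  using assms cover_dual_Qform_0_1_odd cover_dual_Qform_0_1_even by simp

end
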